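(* Let $V$ be a real vector space of dimension $n$ and $2\le k\le n-1$. A non-standard isotropic subspace $L\subseteq V\oplus\wedge^kV^*$ always satisfies (C3s), and never satisfies (C3w) or (C1). The properties (C2w) and (C2s) are independent for non-standard isotropic subspaces: there exist non-standard isotropic subspaces satisfying (C2s) but not (C2w), and ones satisfying (C2w) but not (C2s).
   Context: On $V\oplus\wedge^kV^*$ the pairing is $\langle X+\alpha,Y+\beta\rangle=i_X\beta+i_Y\alpha\in\wedge^{k-1}V^*$, with orthogonal $L^\perp$; $L$ is isotropic if $L\subseteq L^\perp$. $\mathrm{pr}_1,\mathrm{pr}_2$ are the projections; $E=\mathrm{pr}_1(L)$, $A_L=L\cap\wedge^kV^*$. For $W\subseteq V$, $\mathrm{Ann}(W)=\{\alpha\in\wedge^kV^*\mid i_Y\alpha=0\ \forall Y\in W\}$; for $S\subseteq\wedge^kV^*$, $S^\circ=\{X\in V\mid i_X\eta=0\ \forall\eta\in S\}$. An isotropic $L$ is non-standard if $\mathrm{Ann}(E)^\circ\neq E$, equivalently $n-k<\dim E<n$. Conditions: (C1) $L=L^\perp$; (C2w) $L\subseteq L^\perp$ and $L\cap V=\mathrm{pr}_2(L)^\circ$; (C2s) $L\subseteq L^\perp$ and $\mathrm{Ann}(L\cap V)=\mathrm{pr}_2(L)$; (C3w) $L\subseteq L^\perp$ and $E=A_L^\circ$; (C3s) $L\subseteq L^\perp$ and $\mathrm{Ann}(E)=A_L$. *)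

theory Defs
  imports "HOL-Analysis.Analysis"
begin

text \<open>V is modelled as real^('n::finite) (n = CARD('n)). A k-form on V (element of the k-th
exterior power of V^*) is modelled as an alternating multilinear function of
k vectors, represented as a function on lists of vectors which vanishes on lists of
length different from k.\<close>

type_synonym 'n form = "(real^'n) list \<Rightarrow> real"

definition kforms :: "nat \<Rightarrow> ('n::finite) form set" where
  "kforms k = {\<alpha>.
     (\<forall>xs. length xs \<noteq> k \<longrightarrow> \<alpha> xs = 0) \<and>
     (\<forall>xs i u w (a::real) b. length xs = k \<and> i < k \<longrightarrow>
        \<alpha> (xs[i := a *\<^sub>R u + b *\<^sub>R w]) = a * \<alpha> (xs[i := u]) + b * \<alpha> (xs[i := w])) \<and>
     (\<forall>xs. length xs = k \<and> \<not> distinct xs \<longrightarrow> \<alpha> xs = 0)}"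

definition ip :: "real^('n::finite) \<Rightarrow> ('n::finite) form \<Rightarrow> ('n::finite) form" where
  "ip X \<alpha> = (\<lambda>xs. \<alpha> (X # xs))"

definition zform :: "('n::finite) form" where
  "zform = (\<lambda>_. 0)"

definition pairing :: "((real^('n::finite)) \<times> ('n::finite) form) \<Rightarrow> ((real^('n::finite)) \<times> ('n::finite) form) \<Rightarrow> ('n::finite) form" where
  "pairing p q = (\<lambda>xs. ip (fst p) (snd q) xs + ip (fst q) (snd p) xs)"

definition is_subspace :: "nat \<Rightarrow> ((real^('n::finite)) \<times> ('n::finite) form) set \<Rightarrow> bool" where
  "is_subspace k L \<longleftrightarrow>
     (\<forall>p\<in>L. snd p \<in> kforms k) \<and> (0, zform) \<in> L \<and>
     (\<forall>p\<in>L. \<forall>q\<in>L. (fst p + fst q, \<lambda>xs. snd p xs + snd q xs) \<in> L) \<and>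
     (\<forall>p\<in>L. \<forall>c::real. (c *\<^sub>R fst p, \<lambda>xs. c * snd p xs) \<in> L)"

definition Lperp :: "nat \<Rightarrow> ((real^('n::finite)) \<times> ('n::finite) form) set \<Rightarrow> ((real^('n::finite)) \<times> ('n::finite) form) set" where
  "Lperp k L = {q. snd q \<in> kforms k \<and> (\<forall>p\<in>L. pairing p q = zform)}"

definition isotropic :: "nat \<Rightarrow> ((real^('n::finite)) \<times> ('n::finite) form) set \<Rightarrow> bool" where
  "isotropic k L \<longleftrightarrow> L \<subseteq> Lperp k L"

definition Eproj :: "((real^('n::finite)) \<times> ('n::finite) form) set \<Rightarrow> (real^('n::finite)) set" where
  "Eproj L = fst ` L"

definition AL :: "((real^('n::finite)) \<times> ('n::finite) form) set \<Rightarrow> ('n::finite) form set" where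
  "AL L = {\<alpha>. (0, \<alpha>) \<in> L}"

definition LV :: "((real^('n::finite)) \<times> ('n::finite) form) set \<Rightarrow> (real^('n::finite)) set" where
  "LV L = {X. (X, zform) \<in> L}"

definition pr2 :: "((real^('n::finite)) \<times> ('n::finite) form) set \<Rightarrow> ('n::finite) form set" where
  "pr2 L = snd ` L"

definition Ann :: "nat \<Rightarrow> (real^('n::finite)) set \<Rightarrow> ('n::finite) form set" where
  "Ann k W = {\<alpha>\<in>kforms k. \<forall>Y\<in>W. ip Y \<alpha> = zform}"

definition circ :: "('n::finite) form set \<Rightarrow> (real^('n::finite)) set" where
  "circ S = {X. \<forall>\<eta>\<in>S. ip X \<eta> = zform}"

definition nonstandard :: "nat \<Rightarrow> ((real^('n::finite)) \<times> ('n::finite) form) set \<Rightarrow> bool" where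
  "nonstandard k L \<longleftrightarrow> isotropic k L \<and> circ (Ann k (Eproj L)) \<noteq> Eproj L"

definition C1 :: "nat \<Rightarrow> ((real^('n::finite)) \<times> ('n::finite) form) set \<Rightarrow> bool" where
  "C1 k L \<longleftrightarrow> L = Lperp k L"

definition C2w :: "nat \<Rightarrow> ((real^('n::finite)) \<times> ('n::finite) form) set \<Rightarrow> bool" where
  "C2w k L \<longleftrightarrow> isotropic k L \<and> LV L = circ (pr2 L)"

definition C2s :: "nat \<Rightarrow> ((real^('n::finite)) \<times> ('n::finite) form) set \<Rightarrow> bool" where
  "C2s k L \<longleftrightarrow> isotropic k L \<and> Ann k (LV L) = pr2 L"

definition C3w :: "nat \<Rightarrow> ((real^('n::finite)) \<times> ('n::finite) form) set \<Rightarrow> bool" where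
  "C3w k L \<longleftrightarrow> isotropic k L \<and> Eproj L = circ (AL L)"

definition C3s :: "nat \<Rightarrow> ((real^('n::finite)) \<times> ('n::finite) form) set \<Rightarrow> bool" where
  "C3s k L \<longleftrightarrow> isotropic k L \<and> Ann k (Eproj L) = AL L"

end

theory Submission
  imports Defs
begin

text \<open>
  The key tool is an extension lemma: a linear map \<open>\<phi>\<close> from a subspace \<open>E\<close> to \<open>m\<close>-forms
  with \<open>i\<^sub>Y\<^sub>' \<phi>(Y) = - i\<^sub>Y \<phi>(Y')\<close> is \<open>Y \<mapsto> i\<^sub>Y \<beta>\<close> for some \<open>(m+1)\<close>-form \<open>\<beta>\<close>
  (induction on the codimension of \<open>E\<close>). With it, once \<open>Ann(E) \<noteq> 0\<close>, every \<open>X \<notin> E\<close> has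
  \<open>i\<^sub>X \<beta> \<noteq> 0\<close> for some \<open>\<beta> \<in> Ann(E)\<close>; so a non-standard \<open>L\<close> has \<open>Ann(E) = 0\<close>, and isotropy
  gives \<open>A\<^sub>L \<subseteq> Ann(E) = 0\<close>, which is (C3s) and rules out (C3w). Then \<open>L\<close> is the graph of a
  skew map \<open>g\<close> on \<open>E\<close>; contracting \<open>g\<close> with some \<open>X \<notin> E\<close> and extending gives a \<open>k\<close>-form
  \<open>\<beta>\<close> with \<open>(X, \<beta>) \<in> L\<^sup>\<bottom> - L\<close>, so (C1) fails.

  For the examples, let \<open>E\<close> be a coordinate hyperplane, whose annihilator vanishes as
  \<open>k \<ge> 2\<close>, and \<open>L = {(Y, i\<^sub>Y \<Omega>) | Y \<in> E}\<close> for a \<open>(k+1)\<close>-form \<open>\<Omega>\<close>. \<open>\<Omega> = 0\<close> satisfies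
  (C2s) but not (C2w); \<open>\<Omega> = e\<^sup>0 \<and> \<dots> \<and> e\<^sup>k\<close> with \<open>E = ker e\<^sup>k\<close> satisfies (C2w) but not
  (C2s), since \<open>L \<inter> V = ker \<Omega>\<close> is annihilated by \<open>i\<^sub>e\<^sub>k \<Omega> \<notin> pr\<^sub>2(L)\<close>.
\<close>

section \<open>Alternating forms on lists of vectors\<close>

lemma kforms_length: "\<alpha> \<in> kforms m \<Longrightarrow> length xs \<noteq> m \<Longrightarrow> \<alpha> xs = 0"
  unfolding kforms_def by blast

lemma kforms_not_distinct: "\<alpha> \<in> kforms m \<Longrightarrow> \<not> distinct xs \<Longrightarrow> \<alpha> xs = 0"
  unfolding kforms_def by blast

lemma kforms_linear_at:
  "\<alpha> \<in> kforms m \<Longrightarrow> i < length xs \<Longrightarrow>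
   \<alpha> (xs[i := a *\<^sub>R u + b *\<^sub>R w]) = a * \<alpha> (xs[i := u]) + b * \<alpha> (xs[i := w])"
  unfolding kforms_def by (cases "length xs = m") auto

lemma kforms_add_at:
  "\<alpha> \<in> kforms m \<Longrightarrow> i < length xs \<Longrightarrow> \<alpha> (xs[i := u + w]) = \<alpha> (xs[i := u]) + \<alpha> (xs[i := w])"
  using kforms_linear_at[of \<alpha> m i xs 1 u 1 w] by simp

lemma kforms_swap:
  assumes "\<alpha> \<in> kforms m" "i \<noteq> j" "i < length xs" "j < length xs"
  shows "\<alpha> (xs[i := x, j := y]) = - \<alpha> (xs[i := y, j := x])"
proof -
  have repeated: "\<alpha> (xs[i := v, j := v]) = 0" for v
    using assms by (intro kforms_not_distinct[of _ m]) (auto simp: distinct_conv_nth nth_list_update)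
  have "0 = \<alpha> (xs[i := x + y, j := x + y])" using repeated by simp
  also have "\<dots> = \<alpha> (xs[i := x, j := x]) + \<alpha> (xs[i := x, j := y])
                 + (\<alpha> (xs[i := y, j := x]) + \<alpha> (xs[i := y, j := y]))"
    using assms by (simp add: list_update_swap kforms_add_at)
  finally show ?thesis using repeated by simp
qed

lemma kforms_swap_Cons: "\<alpha> \<in> kforms m \<Longrightarrow> \<alpha> (x # y # zs) = - \<alpha> (y # x # zs)"
  using kforms_swap[of \<alpha> m 0 1 "x # y # zs" x y] by simp

lemma kforms_repeat_Cons: "\<alpha> \<in> kforms m \<Longrightarrow> \<alpha> (x # x # zs) = 0"
  using kforms_swap_Cons[of \<alpha> m x x zs] by simp

lemma kforms_swap_nonzero:
  assumes "\<alpha> \<in> kforms m" "\<alpha> xs \<noteq> 0" "i < length xs" "j < length xs"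
  shows "\<alpha> (xs[i := xs ! j, j := xs ! i]) \<noteq> 0"
proof (cases "i = j")
  case False
  then have "\<alpha> (xs[i := xs ! j, j := xs ! i]) = - \<alpha> (xs[i := xs ! i, j := xs ! j])"
    using kforms_swap[OF assms(1) _ assms(3,4)] by blast
  then show ?thesis using assms(2) by simp
qed (use assms in simp)

lemma kforms_nonzero_pair_front:
  assumes \<alpha>: "\<alpha> \<in> kforms m" "\<alpha> xs \<noteq> 0" and pq: "p \<noteq> q" "p < length xs" "q < length xs"
  shows "\<exists>zs. \<alpha> (xs ! p # xs ! q # zs) \<noteq> 0"
proof -
  define ys where "ys = xs[0 := xs ! p, p := xs ! 0]"
  define q' where "q' = (if q = 0 then p else q)"
  have len: "0 < length xs" using pq(2) by linarith
  have ys: "\<alpha> ys \<noteq> 0" "length ys = length xs" "ys ! 0 = xs ! p" "ys ! q' = xs ! q" "q' \<noteq> 0" "q' < length ys"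
    using kforms_swap_nonzero[OF \<alpha> len pq(2)] pq len by (auto simp: ys_def q'_def nth_list_update)
  define zs where "zs = ys[1 := ys ! q', q' := ys ! 1]"
  have "1 < length ys" using ys(5,6) by linarith
  then have "\<alpha> zs \<noteq> 0" "zs ! 0 = xs ! p" "zs ! 1 = xs ! q" "1 < length zs"
    using kforms_swap_nonzero[OF \<alpha>(1) ys(1), of 1 q'] ys by (auto simp: zs_def nth_list_update)
  then show ?thesis
    by (metis Cons_nth_drop_Suc One_nat_def Suc_lessD drop0 lessI)
qed

lemma ip_linear:
  "\<alpha> \<in> kforms m \<Longrightarrow> ip (a *\<^sub>R u + b *\<^sub>R w) \<alpha> = (\<lambda>zs. a * ip u \<alpha> zs + b * ip w \<alpha> zs)"
  using kforms_linear_at[of \<alpha> m 0 "u # _" a u b w] by (simp add: ip_def)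

lemma ip_add: "\<alpha> \<in> kforms m \<Longrightarrow> ip (u + w) \<alpha> = (\<lambda>zs. ip u \<alpha> zs + ip w \<alpha> zs)"
  using ip_linear[of \<alpha> m 1 u 1 w] by simp

lemma ip_scale: "\<alpha> \<in> kforms m \<Longrightarrow> ip (a *\<^sub>R u) \<alpha> = (\<lambda>zs. a * ip u \<alpha> zs)"
  using ip_linear[of \<alpha> m a u 0 u] by simp

lemma kforms_Cons_add_scale:
  "\<alpha> \<in> kforms m \<Longrightarrow> \<alpha> ((v + t *\<^sub>R u) # zs) = \<alpha> (v # zs) + t * \<alpha> (u # zs)"
  using ip_linear[of \<alpha> m 1 v t u] by (simp add: ip_def fun_eq_iff)

lemma kforms_Cons_shear:
  "\<alpha> \<in> kforms m \<Longrightarrow> \<alpha> (u # (v + t *\<^sub>R u) # zs) = \<alpha> (u # v # zs)"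
  using kforms_linear_at[of \<alpha> m 1 "u # v # zs" 1 v t u] kforms_repeat_Cons[of \<alpha> m u zs] by simp

lemma ip_eq_zform_iff: "ip X \<alpha> = zform \<longleftrightarrow> (\<forall>zs. \<alpha> (X # zs) = 0)"
  by (auto simp: ip_def zform_def fun_eq_iff)

lemma ip_zform [simp]: "ip X zform = zform"
  by (simp add: ip_def zform_def)

lemma ip_zero: "\<alpha> \<in> kforms m \<Longrightarrow> ip 0 \<alpha> = zform"
  using ip_scale[of \<alpha> m 0 0] by (simp add: zform_def)

lemma zform_kforms: "zform \<in> kforms m"
  unfolding kforms_def zform_def by auto

lemma kforms_lincomb:
  assumes "\<alpha> \<in> kforms m" "\<beta> \<in> kforms m"
  shows "(\<lambda>xs. a * \<alpha> xs + b * \<beta> xs) \<in> kforms m"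
  using kforms_length[OF assms(1)] kforms_length[OF assms(2)]
    kforms_not_distinct[OF assms(1)] kforms_not_distinct[OF assms(2)]
    kforms_linear_at[OF assms(1)] kforms_linear_at[OF assms(2)]
  unfolding kforms_def by (auto simp: algebra_simps)

lemma kforms_scale: "\<alpha> \<in> kforms m \<Longrightarrow> (\<lambda>xs. a * \<alpha> xs) \<in> kforms m"
  using kforms_lincomb[OF _ zform_kforms, of \<alpha> m a 0] by simp

lemma ip_kforms:
  assumes "\<alpha> \<in> kforms (Suc m)"
  shows "ip X \<alpha> \<in> kforms m"
  using kforms_length[OF assms, of "X # _"] kforms_not_distinct[OF assms, of "X # _"]
    kforms_linear_at[OF assms, of "Suc _" "X # _"]
  unfolding kforms_def ip_def by auto

lemma ip_zform_subspace: "\<alpha> \<in> kforms m \<Longrightarrow> subspace {Y. ip Y \<alpha> = zform}"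
  unfolding subspace_def using ip_zero by (auto simp: ip_add ip_scale zform_def)

section \<open>Skew families of forms and their extension\<close>

definition skew_family :: "nat \<Rightarrow> (real^'n::finite) set \<Rightarrow> (real^'n \<Rightarrow> 'n form) \<Rightarrow> bool" where
  "skew_family m E \<phi> \<longleftrightarrow>
     (\<forall>Y\<in>E. \<phi> Y \<in> kforms m) \<and>
     (\<forall>Y\<in>E. \<forall>Y'\<in>E. \<forall>a b. \<phi> (a *\<^sub>R Y + b *\<^sub>R Y') = (\<lambda>zs. a * \<phi> Y zs + b * \<phi> Y' zs)) \<and>
     (\<forall>Y\<in>E. \<forall>Y'\<in>E. \<forall>zs. \<phi> Y (Y' # zs) = - \<phi> Y' (Y # zs))"

lemma skew_familyI:
  assumes "\<And>Y. Y \<in> E \<Longrightarrow> \<phi> Y \<in> kforms m"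
    and "\<And>Y Y' a b. Y \<in> E \<Longrightarrow> Y' \<in> E \<Longrightarrow> \<phi> (a *\<^sub>R Y + b *\<^sub>R Y') = (\<lambda>zs. a * \<phi> Y zs + b * \<phi> Y' zs)"
    and "\<And>Y Y' zs. Y \<in> E \<Longrightarrow> Y' \<in> E \<Longrightarrow> \<phi> Y (Y' # zs) = - \<phi> Y' (Y # zs)"
  shows "skew_family m E \<phi>"
  using assms unfolding skew_family_def by blast

lemma skew_family_kforms: "skew_family m E \<phi> \<Longrightarrow> Y \<in> E \<Longrightarrow> \<phi> Y \<in> kforms m"
  unfolding skew_family_def by blast

lemma skew_family_linear:
  "skew_family m E \<phi> \<Longrightarrow> Y \<in> E \<Longrightarrow> Y' \<in> E \<Longrightarrow>
   \<phi> (a *\<^sub>R Y + b *\<^sub>R Y') = (\<lambda>zs. a * \<phi> Y zs + b * \<phi> Y' zs)"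
  unfolding skew_family_def by blast

lemma skew_family_skew: "skew_family m E \<phi> \<Longrightarrow> Y \<in> E \<Longrightarrow> Y' \<in> E \<Longrightarrow> \<phi> Y (Y' # zs) = - \<phi> Y' (Y # zs)"
  unfolding skew_family_def by blast

lemma skew_family_vanishes_on_mem:
  assumes \<phi>: "skew_family m E \<phi>" and Y: "Y \<in> E" "Y \<in> set zs"
  shows "\<phi> Y zs = 0"
proof -
  have self: "\<phi> Y (Y # ws) = 0" for ws
    using skew_family_skew[OF \<phi> Y(1) Y(1), of ws] by simp
  obtain j where j: "j < length zs" "zs ! j = Y" using Y(2) by (metis in_set_conv_nth)
  show ?thesis
  proof (cases j)
    case 0
    with j have "zs = Y # tl zs" by (cases zs) auto
    then show ?thesis using self by metis
  next
    case (Suc i)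
    then obtain z ws where zs: "zs = z # ws" using j by (cases zs) auto
    have "\<phi> Y (zs[0 := z, j := Y]) = - \<phi> Y (zs[0 := Y, j := z])"
      by (rule kforms_swap[OF skew_family_kforms[OF \<phi> Y(1)]]) (use j Suc zs in auto)
    moreover have "zs[0 := z, j := Y] = zs" using j(2) zs by (metis list_update_id nth_Cons_0)
    moreover have "zs[0 := Y, j := z] = Y # ws[i := z]" using zs Suc by simp
    ultimately show ?thesis using self by simp
  qed
qed

lemma skew_family_UNIV_extends:
  assumes \<phi>: "skew_family m UNIV \<phi>"
  shows "\<exists>\<beta>\<in>kforms (Suc m). \<forall>Y. ip Y \<beta> = \<phi> Y"
proof
  define \<beta> where "\<beta> xs = (if length xs = Suc m then \<phi> (hd xs) (tl xs) else 0)" for xs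
  have linear: "\<beta> (xs[i := a *\<^sub>R u + b *\<^sub>R w]) = a * \<beta> (xs[i := u]) + b * \<beta> (xs[i := w])"
    if "length xs = Suc m" "i < Suc m" for xs i a u b w
  proof -
    obtain z zs where xs: "xs = z # zs" using \<open>length xs = Suc m\<close> by (cases xs) auto
    show ?thesis
    proof (cases i)
      case 0
      then show ?thesis using that xs skew_family_linear[OF \<phi>] by (simp add: \<beta>_def)
    next
      case (Suc j)
      then show ?thesis
        using that xs kforms_linear_at[OF skew_family_kforms[OF \<phi>], of z j zs] by (simp add: \<beta>_def)
    qed
  qed
  have alternating: "\<beta> xs = 0" if "\<not> distinct xs" for xs
  proof (cases xs)
    case (Cons z zs)
    then show ?thesis
      using that skew_family_vanishes_on_mem[OF \<phi>, of z zs]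
        kforms_not_distinct[OF skew_family_kforms[OF \<phi>], of z zs]
      by (cases "z \<in> set zs") (auto simp: \<beta>_def)
  qed (use that in simp)
  have "\<forall>xs. length xs \<noteq> Suc m \<longrightarrow> \<beta> xs = 0" by (simp add: \<beta>_def)
  then show "\<beta> \<in> kforms (Suc m)"
    unfolding kforms_def using linear alternating by blast
  show "\<forall>Y. ip Y \<beta> = \<phi> Y"
    using kforms_length[OF skew_family_kforms[OF \<phi>]] by (auto simp: ip_def \<beta>_def fun_eq_iff)
qed

lemma skew_family_compose:
  assumes \<phi>: "skew_family m E \<phi>" and p: "linear p" "p ` E' \<subseteq> E"
    and invariant: "\<And>Z Y zs. Z \<in> E \<Longrightarrow> Y \<in> E' \<Longrightarrow> \<phi> Z (Y # zs) = \<phi> Z (p Y # zs)"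
  shows "skew_family m E' (\<lambda>Y. \<phi> (p Y))"
proof (rule skew_familyI)
  fix Y Y' a b assume "Y \<in> E'" "Y' \<in> E'"
  then show "\<phi> (p (a *\<^sub>R Y + b *\<^sub>R Y')) = (\<lambda>zs. a * \<phi> (p Y) zs + b * \<phi> (p Y') zs)"
    using skew_family_linear[OF \<phi>] p by (simp add: linear_add linear_scale image_subset_iff)
next
  fix Y Y' zs assume Y: "Y \<in> E'" "Y' \<in> E'"
  then have pY: "p Y \<in> E" "p Y' \<in> E" using p(2) by auto
  have "\<phi> (p Y) (Y' # zs) = \<phi> (p Y) (p Y' # zs)" using invariant pY Y by simp
  also have "\<dots> = - \<phi> (p Y') (p Y # zs)" using skew_family_skew[OF \<phi> pY] .
  also have "\<dots> = - \<phi> (p Y') (Y # zs)" using invariant pY Y by simp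
  finally show "\<phi> (p Y) (Y' # zs) = - \<phi> (p Y') (Y # zs)" .
qed (use \<phi> p in \<open>auto simp: skew_family_kforms\<close>)

lemma skew_family_contract:
  assumes \<phi>: "skew_family (Suc m) E \<phi>"
  shows "skew_family m E (\<lambda>Y zs. - \<phi> Y (u # zs))"
proof (rule skew_familyI)
  fix Y assume "Y \<in> E"
  then have "ip u (\<phi> Y) \<in> kforms m" by (intro ip_kforms skew_family_kforms[OF \<phi>])
  from kforms_scale[OF this, of "-1"] show "(\<lambda>zs. - \<phi> Y (u # zs)) \<in> kforms m"
    by (simp add: ip_def)
next
  fix Y Y' a b assume "Y \<in> E" "Y' \<in> E"
  from skew_family_linear[OF \<phi> this]
  show "(\<lambda>zs. - \<phi> (a *\<^sub>R Y + b *\<^sub>R Y') (u # zs)) = (\<lambda>zs. a * - \<phi> Y (u # zs) + b * - \<phi> Y' (u # zs))"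
    by simp
next
  fix Y Y' zs assume Y: "Y \<in> E" "Y' \<in> E"
  have "- \<phi> Y (u # Y' # zs) = \<phi> Y (Y' # u # zs)"
    using kforms_swap_Cons[OF skew_family_kforms[OF \<phi> Y(1)], of u Y' zs] by simp
  also have "\<dots> = - \<phi> Y' (Y # u # zs)" using skew_family_skew[OF \<phi> Y] .
  also have "\<dots> = - (- \<phi> Y' (u # Y # zs))"
    using kforms_swap_Cons[OF skew_family_kforms[OF \<phi> Y(2)], of u Y zs] by simp
  finally show "- \<phi> Y (u # Y' # zs) = - (- \<phi> Y' (u # Y # zs))" .
qed

lemma skew_family_extend_along:
  assumes \<phi>: "skew_family m E \<phi>" and p: "linear p" "p ` E' \<subseteq> E" and f: "linear f"
    and decomp: "\<And>Y. Y \<in> E' \<Longrightarrow> Y = p Y + f Y *\<^sub>R u"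
    and \<psi>: "\<psi> \<in> kforms m" "\<And>Y zs. Y \<in> E' \<Longrightarrow> \<psi> (Y # zs) = - \<phi> (p Y) (u # zs)"
  shows "skew_family m E' (\<lambda>Y zs. \<phi> (p Y) zs + f Y * \<psi> zs)"
proof (rule skew_familyI)
  fix Y assume "Y \<in> E'"
  then show "(\<lambda>zs. \<phi> (p Y) zs + f Y * \<psi> zs) \<in> kforms m"
    using kforms_lincomb[OF skew_family_kforms[OF \<phi>] \<psi>(1), of "p Y" 1 "f Y"] p(2) by auto
next
  fix Y Y' a b assume "Y \<in> E'" "Y' \<in> E'"
  then have "\<phi> (p (a *\<^sub>R Y + b *\<^sub>R Y')) = (\<lambda>zs. a * \<phi> (p Y) zs + b * \<phi> (p Y') zs)"
    using skew_family_linear[OF \<phi>] p by (simp add: linear_add linear_scale image_subset_iff)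
  then show "(\<lambda>zs. \<phi> (p (a *\<^sub>R Y + b *\<^sub>R Y')) zs + f (a *\<^sub>R Y + b *\<^sub>R Y') * \<psi> zs) =
      (\<lambda>zs. a * (\<phi> (p Y) zs + f Y * \<psi> zs) + b * (\<phi> (p Y') zs + f Y' * \<psi> zs))"
    using f by (simp add: linear_add linear_scale algebra_simps)
next
  fix Y Y' zs assume Y: "Y \<in> E'" "Y' \<in> E'"
  then have pY: "p Y \<in> E" "p Y' \<in> E" using p(2) by auto
  have expand: "\<phi> (p Y) (Y' # zs) + f Y * \<psi> (Y' # zs)
      = \<phi> (p Y) (p Y' # zs) + f Y' * \<phi> (p Y) (u # zs) - f Y * \<phi> (p Y') (u # zs)"
    if "Y \<in> E'" "Y' \<in> E'" for Y Y'
    using kforms_Cons_add_scale[OF skew_family_kforms[OF \<phi>], of "p Y" "p Y'" "f Y'" u zs]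
      decomp[OF that(2)] \<psi>(2)[OF that(2)] p(2) that by auto
  show "\<phi> (p Y) (Y' # zs) + f Y * \<psi> (Y' # zs) = - (\<phi> (p Y') (Y # zs) + f Y' * \<psi> (Y # zs))"
    using expand[OF Y] expand[OF Y(2,1)] skew_family_skew[OF \<phi> pY, of zs] by simp
qed

lemma subspace_separating_functional:
  fixes E :: "'a::euclidean_space set"
  assumes "subspace E" "u \<notin> E"
  obtains f :: "'a \<Rightarrow> real" where "linear f" "\<forall>y\<in>E. f y = 0" "f u = 1"
proof -
  obtain y z where y: "y \<in> span E" and z: "\<And>w. w \<in> span E \<Longrightarrow> orthogonal z w" and u: "u = y + z"
    using orthogonal_subspace_decomp_exists by blast
  have "y \<in> E" using y assms(1) by (metis span_eq_iff)
  then have "z \<noteq> 0" using u assms(2) by auto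
  moreover have "inner z y = 0" using z[OF y] by (simp add: orthogonal_def)
  ultimately have "inner z u / inner z z = 1" using u by (simp add: inner_add_right)
  moreover have "linear (\<lambda>v. inner z v / inner z z)"
    by (rule linearI) (auto simp: inner_add_right add_divide_distrib)
  moreover have "\<forall>w\<in>E. inner z w / inner z z = 0"
    using z[OF span_base] by (simp add: orthogonal_def)
  ultimately show ?thesis using that by blast
qed

lemma projection_along_vector:
  assumes E: "subspace E" and f: "linear f" "\<forall>y\<in>E. f y = 0" "f u = 1"
  shows "linear (\<lambda>Y. Y - f Y *\<^sub>R u)" "(\<lambda>Y. Y - f Y *\<^sub>R u) ` span (insert u E) \<subseteq> E"
proof -
  show "linear (\<lambda>Y. Y - f Y *\<^sub>R u)"
    by (rule linearI) (simp_all add: linear_add[OF f(1)] linear_scale[OF f(1)] algebra_simps)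
  have "Y - f Y *\<^sub>R u \<in> E" if Y: "Y \<in> span (insert u E)" for Y
  proof -
    obtain t where "Y - t *\<^sub>R u \<in> span E" using Y span_breakdown_eq by blast
    then have t: "Y - t *\<^sub>R u \<in> E" using E by (metis span_eq_iff)
    then have "f (Y - t *\<^sub>R u) = 0" using f(2) by blast
    then have "f Y = t" using f(1,3) by (simp add: linear_diff linear_scale)
    then show ?thesis using t by simp
  qed
  then show "(\<lambda>Y. Y - f Y *\<^sub>R u) ` span (insert u E) \<subseteq> E" by blast
qed

lemma skew_family_extends_step:
  fixes E :: "(real^'n::finite) set"
  assumes E: "subspace E" "u \<notin> E" and \<phi>: "skew_family m E \<phi>"
    and extends: "\<And>m \<phi>'. skew_family m (span (insert u E)) \<phi>' \<Longrightarrow>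
                    \<exists>\<beta>\<in>kforms (Suc m). \<forall>Y\<in>span (insert u E). ip Y \<beta> = \<phi>' Y"
  shows "\<exists>\<beta>\<in>kforms (Suc m). \<forall>Y\<in>E. ip Y \<beta> = \<phi> Y"
proof -
  obtain f :: "real^'n \<Rightarrow> real" where f: "linear f" "\<forall>y\<in>E. f y = 0" "f u = 1"
    using subspace_separating_functional[OF E] by blast
  define E' where "E' = span (insert u E)"
  define p where "p = (\<lambda>Y. Y - f Y *\<^sub>R u)"
  have p: "linear p" "p ` E' \<subseteq> E" "\<And>Y. Y = p Y + f Y *\<^sub>R u"
    using projection_along_vector[OF E(1) f] by (simp_all add: p_def E'_def)
  \<comment> \<open>\<open>\<psi>\<close> is the value at \<open>u\<close> of the extended family; it solves the extension
    problem one degree lower.\<close>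
  obtain \<psi> where \<psi>: "\<psi> \<in> kforms m" "\<And>Y zs. Y \<in> E' \<Longrightarrow> \<psi> (Y # zs) = - \<phi> (p Y) (u # zs)"
  proof (cases m)
    case 0
    have "\<phi> (p Y) (u # zs) = 0" if "Y \<in> E'" for Y zs
      using kforms_length[OF skew_family_kforms[OF \<phi>]] p(2) that 0 by auto
    then show ?thesis using that[OF zform_kforms] by (simp add: zform_def)
  next
    case (Suc m')
    have "skew_family m' E (\<lambda>Z zs. - \<phi> Z (u # zs))"
      using skew_family_contract \<phi> Suc by blast
    moreover have "- \<phi> Z (u # Y # zs) = - \<phi> Z (u # p Y # zs)" if "Z \<in> E" for Z Y zs
      using kforms_Cons_shear[OF skew_family_kforms[OF \<phi> that], of u "p Y" "f Y" zs] p(3)[of Y]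
      by simp
    ultimately have "skew_family m' E' (\<lambda>Y zs. - \<phi> (p Y) (u # zs))"
      using skew_family_compose[OF _ p(1,2)] by blast
    then obtain \<beta> where "\<beta> \<in> kforms (Suc m')" "\<forall>Y\<in>E'. ip Y \<beta> = (\<lambda>zs. - \<phi> (p Y) (u # zs))"
      using extends unfolding E'_def by blast
    then show ?thesis using that Suc by (auto simp: ip_def fun_eq_iff)
  qed
  have "skew_family m E' (\<lambda>Y zs. \<phi> (p Y) zs + f Y * \<psi> zs)"
    using skew_family_extend_along[OF \<phi> p(1,2) f(1) p(3) \<psi>] .
  then obtain \<beta> where "\<beta> \<in> kforms (Suc m)" "\<forall>Y\<in>E'. ip Y \<beta> = (\<lambda>zs. \<phi> (p Y) zs + f Y * \<psi> zs)"
    using extends unfolding E'_def by blast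
  moreover have "(\<lambda>zs. \<phi> (p Y) zs + f Y * \<psi> zs) = \<phi> Y" if "Y \<in> E" for Y
    using f(2) that by (simp add: p_def)
  moreover have "E \<subseteq> E'" unfolding E'_def using span_superset[of "insert u E"] by blast
  ultimately show ?thesis by (metis subsetD)
qed

lemma skew_family_extends:
  fixes E :: "(real^'n::finite) set"
  assumes "subspace E" "skew_family m E \<phi>"
  shows "\<exists>\<beta>\<in>kforms (Suc m). \<forall>Y\<in>E. ip Y \<beta> = \<phi> Y"
proof -
  have "\<forall>(E :: (real^'n) set) m \<phi>. subspace E \<longrightarrow> CARD('n) - dim E = c \<longrightarrow> skew_family m E \<phi> \<longrightarrow>
          (\<exists>\<beta>\<in>kforms (Suc m). \<forall>Y\<in>E. ip Y \<beta> = \<phi> Y)" for c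
  proof (induction c)
    case 0
    show ?case
    proof (intro allI impI)
      fix E :: "(real^'n) set" and m \<phi>
      assume E: "subspace E" "CARD('n) - dim E = 0" and \<phi>: "skew_family m E \<phi>"
      have "dim E = CARD('n)" using dim_subset_UNIV_cart[of E] E(2) by linarith
      then have "span E = UNIV" using dim_eq_full[of E] by simp
      then have "E = UNIV" using E(1) span_eq_iff by metis
      then show "\<exists>\<beta>\<in>kforms (Suc m). \<forall>Y\<in>E. ip Y \<beta> = \<phi> Y"
        using skew_family_UNIV_extends[of m \<phi>] \<phi> by simp
    qed
  next
    case (Suc c)
    show ?case
    proof (intro allI impI)
      fix E :: "(real^'n) set" and m \<phi>
      assume E: "subspace E" "CARD('n) - dim E = Suc c" and \<phi>: "skew_family m E \<phi>"
      have "E \<noteq> UNIV" using E(2) by (auto simp: dim_UNIV)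
      then obtain u where u: "u \<notin> E" by blast
      then have "u \<notin> span E" using E(1) by (metis span_eq_iff)
      then have "CARD('n) - dim (span (insert u E)) = c" using E(2) by (simp add: dim_insert)
      then show "\<exists>\<beta>\<in>kforms (Suc m). \<forall>Y\<in>E. ip Y \<beta> = \<phi> Y"
        using skew_family_extends_step[OF E(1) u \<phi>] Suc.IH by blast
    qed
  qed
  from this[rule_format, OF assms(1) refl assms(2)] show ?thesis .
qed

section \<open>Non-standard isotropic subspaces\<close>

lemma is_subspace_kforms: "is_subspace k L \<Longrightarrow> p \<in> L \<Longrightarrow> snd p \<in> kforms k"
  unfolding is_subspace_def by blast

lemma is_subspace_zero: "is_subspace k L \<Longrightarrow> (0, zform) \<in> L"
  unfolding is_subspace_def by blast

lemma is_subspace_add: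
  "is_subspace k L \<Longrightarrow> p \<in> L \<Longrightarrow> q \<in> L \<Longrightarrow> (fst p + fst q, \<lambda>xs. snd p xs + snd q xs) \<in> L"
  unfolding is_subspace_def by blast

lemma is_subspace_scale: "is_subspace k L \<Longrightarrow> p \<in> L \<Longrightarrow> (c *\<^sub>R fst p, \<lambda>xs. c * snd p xs) \<in> L"
  unfolding is_subspace_def by blast

lemma isotropic_pairing: "isotropic k L \<Longrightarrow> p \<in> L \<Longrightarrow> q \<in> L \<Longrightarrow> pairing p q = zform"
  unfolding isotropic_def Lperp_def by blast

lemma subspace_Eproj:
  assumes L: "is_subspace k L"
  shows "subspace (Eproj L)"
  unfolding subspace_def Eproj_def
proof (intro conjI ballI allI)
  show "0 \<in> fst ` L" using is_subspace_zero[OF L] by force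
  show "x + y \<in> fst ` L" if "x \<in> fst ` L" "y \<in> fst ` L" for x y
    using that is_subspace_add[OF L] by force
  show "c *\<^sub>R x \<in> fst ` L" if "x \<in> fst ` L" for c x
    using that is_subspace_scale[OF L] by force
qed

lemma zform_Ann: "zform \<in> Ann k E"
  unfolding Ann_def using zform_kforms by simp

lemma subset_circ_Ann: "E \<subseteq> circ (Ann k E)"
  unfolding circ_def Ann_def by blast

lemma AL_subset_Ann:
  assumes L: "is_subspace k L" "isotropic k L"
  shows "AL L \<subseteq> Ann k (Eproj L)"
proof
  fix \<alpha> assume "\<alpha> \<in> AL L"
  then have \<alpha>: "(0, \<alpha>) \<in> L" by (simp add: AL_def)
  have "ip Y \<alpha> = zform" if "(Y, \<beta>) \<in> L" for Y \<beta>
    using isotropic_pairing[OF L(2) that \<alpha>] ip_zero[OF is_subspace_kforms[OF L(1) that]]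
    by (simp add: pairing_def zform_def)
  then show "\<alpha> \<in> Ann k (Eproj L)"
    using is_subspace_kforms[OF L(1) \<alpha>] by (auto simp: Ann_def Eproj_def)
qed

lemma circ_Ann_subset:
  fixes E :: "(real^'n::finite) set"
  assumes E: "subspace E" and \<alpha>: "\<alpha> \<in> Ann k E" "\<alpha> \<noteq> zform" and "0 < k"
  shows "circ (Ann k E) \<subseteq> E"
proof
  fix X assume X: "X \<in> circ (Ann k E)"
  show "X \<in> E"
  proof (rule ccontr)
    assume "X \<notin> E"
    then obtain f :: "real^'n \<Rightarrow> real" where f: "linear f" "\<forall>Y\<in>E. f Y = 0" "f X = 1"
      using subspace_separating_functional[OF E] by blast
    obtain m where k: "k = Suc m" using \<open>0 < k\<close> gr0_implies_Suc by blast
    have \<alpha>k: "\<alpha> \<in> kforms (Suc m)" using \<alpha>(1) k by (simp add: Ann_def)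
    define E' where "E' = span (insert X E)"
    have "insert X E \<subseteq> {Y. ip Y \<alpha> = zform}"
      using X \<alpha>(1) by (auto simp: circ_def Ann_def)
    then have "E' \<subseteq> {Y. ip Y \<alpha> = zform}"
      unfolding E'_def by (rule span_minimal[OF _ ip_zform_subspace[OF \<alpha>k]])
    then have \<alpha>E': "\<alpha> (Y # zs) = 0" if "Y \<in> E'" for Y zs
      using that by (auto simp: ip_eq_zform_iff)
    obtain xs where "\<alpha> xs \<noteq> 0" using \<alpha>(2) by (auto simp: zform_def)
    moreover have "xs \<noteq> []" using kforms_length[OF \<alpha>k] calculation by auto
    ultimately obtain v vs where \<alpha>v: "\<alpha> (v # vs) \<noteq> 0" by (metis neq_Nil_conv)
    define \<gamma> where "\<gamma> = ip v \<alpha>"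
    have \<gamma>E': "\<gamma> (Y # zs) = 0" if "Y \<in> E'" for Y zs
      using kforms_swap_Cons[OF \<alpha>k, of v Y zs] \<alpha>E'[OF that] by (simp add: \<gamma>_def ip_def)
    \<comment> \<open>The extension \<open>\<beta>\<close> below plays the role of \<open>f \<and> \<gamma>\<close>: it lies in \<open>Ann(E)\<close>, yet \<open>i\<^sub>X \<beta> = \<gamma> \<noteq> 0\<close>.\<close>
    have "skew_family m E' (\<lambda>Y zs. f Y * \<gamma> zs)"
    proof (rule skew_familyI)
      show "(\<lambda>zs. f Y * \<gamma> zs) \<in> kforms m" for Y
        unfolding \<gamma>_def by (intro kforms_scale ip_kforms \<alpha>k)
      show "(\<lambda>zs. f (a *\<^sub>R Y + b *\<^sub>R Y') * \<gamma> zs) = (\<lambda>zs. a * (f Y * \<gamma> zs) + b * (f Y' * \<gamma> zs))"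
        for Y Y' a b using f(1) by (simp add: linear_add linear_scale algebra_simps)
    qed (simp add: \<gamma>E')
    then obtain \<beta> where \<beta>: "\<beta> \<in> kforms (Suc m)" "\<forall>Y\<in>E'. ip Y \<beta> = (\<lambda>zs. f Y * \<gamma> zs)"
      using skew_family_extends[of E'] unfolding E'_def by blast
    have "E \<subseteq> E'" "X \<in> E'" by (auto simp: E'_def span_superset span_base)
    then have "\<beta> \<in> Ann k E" using \<beta> f(2) k by (auto simp: Ann_def zform_def subset_iff)
    then have "ip X \<beta> = zform" using X by (simp add: circ_def)
    moreover have "ip X \<beta> = \<gamma>" using \<beta>(2) \<open>X \<in> E'\<close> f(3) by simp
    ultimately have "\<gamma> = zform" by simp
    then show False using \<alpha>v by (simp add: \<gamma>_def ip_eq_zform_iff)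
  qed
qed

lemma nonstandard_Ann_Eproj:
  assumes L: "is_subspace k L" "nonstandard k L" and "0 < k"
  shows "Ann k (Eproj L) = {zform}"
proof (rule ccontr)
  assume "Ann k (Eproj L) \<noteq> {zform}"
  then obtain \<alpha> where "\<alpha> \<in> Ann k (Eproj L)" "\<alpha> \<noteq> zform" using zform_Ann by blast
  then have "circ (Ann k (Eproj L)) \<subseteq> Eproj L"
    using circ_Ann_subset[OF subspace_Eproj[OF L(1)] _ _ \<open>0 < k\<close>] by blast
  then show False using L(2) subset_circ_Ann by (auto simp: nonstandard_def)
qed

lemma nonstandard_AL:
  assumes L: "is_subspace k L" "nonstandard k L" and "0 < k"
  shows "AL L = {zform}"
  using AL_subset_Ann[OF L(1)] L nonstandard_Ann_Eproj[OF L \<open>0 < k\<close>] is_subspace_zero[OF L(1)]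
  by (auto simp: AL_def nonstandard_def)

lemma nonstandard_C3s:
  assumes "is_subspace k L" "nonstandard k L" "0 < k"
  shows "C3s k L"
  using nonstandard_Ann_Eproj[OF assms] nonstandard_AL[OF assms] assms(2)
  by (simp add: C3s_def nonstandard_def)

lemma nonstandard_not_C3w:
  assumes "is_subspace k L" "nonstandard k L" "0 < k"
  shows "\<not> C3w k L"
  using nonstandard_Ann_Eproj[OF assms] nonstandard_AL[OF assms] assms(2)
  by (auto simp: C3w_def nonstandard_def)

lemma isotropic_graph_skew_family:
  assumes L: "is_subspace k L" "isotropic k L" and AL: "AL L = {zform}"
  obtains g where "\<forall>p\<in>L. snd p = g (fst p)" "skew_family k (Eproj L) g"
proof
  have unique: "\<gamma> = \<gamma>'" if "(Y, \<gamma>) \<in> L" "(Y, \<gamma>') \<in> L" for Y \<gamma> \<gamma>'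
  proof -
    have "(0, \<lambda>xs. \<gamma> xs - \<gamma>' xs) \<in> L"
      using is_subspace_add[OF L(1) that(1) is_subspace_scale[OF L(1) that(2), of "-1"]] by simp
    then have "(\<lambda>xs. \<gamma> xs - \<gamma>' xs) = zform" using AL by (auto simp: AL_def)
    then show ?thesis by (simp add: zform_def fun_eq_iff)
  qed
  define g where "g Y = (SOME \<gamma>. (Y, \<gamma>) \<in> L)" for Y
  show graph: "\<forall>p\<in>L. snd p = g (fst p)"
    unfolding g_def by (metis (mono_tags, lifting) prod.collapse someI unique)
  have gL: "(Y, g Y) \<in> L" if "Y \<in> Eproj L" for Y
    using that graph by (force simp: Eproj_def)
  show "skew_family k (Eproj L) g"
  proof (rule skew_familyI)
    show "g Y \<in> kforms k" if "Y \<in> Eproj L" for Y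
      using is_subspace_kforms[OF L(1) gL[OF that]] by simp
    show "g (a *\<^sub>R Y + b *\<^sub>R Y') = (\<lambda>zs. a * g Y zs + b * g Y' zs)"
      if "Y \<in> Eproj L" "Y' \<in> Eproj L" for Y Y' a b
    proof -
      have "(a *\<^sub>R Y + b *\<^sub>R Y', \<lambda>zs. a * g Y zs + b * g Y' zs) \<in> L"
        using is_subspace_add[OF L(1) is_subspace_scale[OF L(1) gL[OF that(1)], of a]
            is_subspace_scale[OF L(1) gL[OF that(2)], of b]] by simp
      then show ?thesis using graph by fastforce
    qed
    show "g Y (Y' # zs) = - g Y' (Y # zs)" if "Y \<in> Eproj L" "Y' \<in> Eproj L" for Y Y' zs
      using isotropic_pairing[OF L(2) gL[OF that(2)] gL[OF that(1)]]
      by (simp add: pairing_def ip_def zform_def fun_eq_iff eq_neg_iff_add_eq_0)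
  qed
qed

lemma nonstandard_not_C1:
  assumes L: "is_subspace k L" "nonstandard k L" and "0 < k"
  shows "\<not> C1 k L"
proof
  assume C1: "C1 k L"
  have iso: "isotropic k L" using L(2) by (simp add: nonstandard_def)
  have "Eproj L \<noteq> UNIV" using L(2) subset_circ_Ann by (auto simp: nonstandard_def)
  then obtain X where X: "X \<notin> Eproj L" by blast
  obtain m where k: "k = Suc m" using \<open>0 < k\<close> gr0_implies_Suc by blast
  obtain g where graph: "\<forall>p\<in>L. snd p = g (fst p)" and g: "skew_family k (Eproj L) g"
    using isotropic_graph_skew_family[OF L(1) iso nonstandard_AL[OF L \<open>0 < k\<close>]] by blast
  have "skew_family m (Eproj L) (\<lambda>Y zs. - g Y (X # zs))"
    using skew_family_contract g k by blast
  then obtain \<beta> where \<beta>: "\<beta> \<in> kforms k" "\<forall>Y\<in>Eproj L. ip Y \<beta> = (\<lambda>zs. - g Y (X # zs))"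
    using skew_family_extends[OF subspace_Eproj[OF L(1)]] k by blast
  have "pairing p (X, \<beta>) = zform" if "p \<in> L" for p
    using that graph \<beta>(2) by (force simp: pairing_def ip_def zform_def Eproj_def)
  then have "(X, \<beta>) \<in> Lperp k L" using \<beta>(1) by (simp add: Lperp_def)
  then have "(X, \<beta>) \<in> L" using C1 by (simp add: C1_def)
  then show False using X by (force simp: Eproj_def)
qed

section \<open>Graphs over a coordinate hyperplane\<close>

lemma Ann_hyperplane:
  fixes c :: "'n::finite"
  assumes "2 \<le> k"
  shows "Ann k {Y :: real^'n. Y $ c = 0} = {zform}"
proof -
  define u :: "real^'n" where "u = axis c 1"
  have split: "\<exists>e t. e $ c = 0 \<and> v = e + t *\<^sub>R u" for v
    by (rule exI[of _ "v - (v $ c) *\<^sub>R u"], rule exI[of _ "v $ c"]) (simp add: u_def)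
  have "\<alpha> = zform" if \<alpha>: "\<alpha> \<in> Ann k {Y. Y $ c = 0}" for \<alpha>
  proof
    fix xs
    have \<alpha>k: "\<alpha> \<in> kforms k" using \<alpha> by (simp add: Ann_def)
    have vanish: "\<alpha> (e # zs) = 0" if "e $ c = 0" for e zs
      using \<alpha> that by (auto simp: Ann_def ip_eq_zform_iff)
    show "\<alpha> xs = zform xs"
    proof (cases "length xs = k")
      case True
      with \<open>2 \<le> k\<close> obtain v w zs where xs: "xs = v # w # zs"
        by (metis Suc_le_length_iff numeral_2_eq_2)
      obtain e s where e: "e $ c = 0" "v = e + s *\<^sub>R u" using split by blast
      obtain e' t where e': "e' $ c = 0" "w = e' + t *\<^sub>R u" using split by blast
      have "\<alpha> (v # w # zs) = s * \<alpha> (u # w # zs)"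
        using kforms_Cons_add_scale[OF \<alpha>k] vanish[OF e(1)] e(2) by simp
      also have "\<alpha> (u # w # zs) = - \<alpha> (e' # u # zs)"
        using kforms_Cons_shear[OF \<alpha>k] kforms_swap_Cons[OF \<alpha>k, of u e' zs] e'(2) by simp
      finally show ?thesis using vanish[OF e'(1)] xs by (simp add: zform_def)
    qed (simp add: kforms_length[OF \<alpha>k] zform_def)
  qed
  then show ?thesis using zform_Ann by blast
qed

definition hyperplane_graph :: "'n::finite \<Rightarrow> 'n form \<Rightarrow> ((real^'n) \<times> 'n form) set" where
  "hyperplane_graph c \<Omega> = {p. fst p $ c = 0 \<and> snd p = ip (fst p) \<Omega>}"

lemma is_subspace_hyperplane_graph:
  assumes "\<Omega> \<in> kforms (Suc k)"
  shows "is_subspace k (hyperplane_graph c \<Omega>)"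
  using ip_kforms[OF assms] ip_add[OF assms] ip_scale[OF assms] ip_zero[OF assms]
  by (auto simp: is_subspace_def hyperplane_graph_def)

lemma isotropic_hyperplane_graph:
  assumes \<Omega>: "\<Omega> \<in> kforms (Suc k)"
  shows "isotropic k (hyperplane_graph c \<Omega>)"
  unfolding isotropic_def Lperp_def
proof (intro subsetI CollectI conjI ballI)
  fix q assume q: "q \<in> hyperplane_graph c \<Omega>"
  then show "snd q \<in> kforms k" using ip_kforms[OF \<Omega>] by (simp add: hyperplane_graph_def)
  fix p assume "p \<in> hyperplane_graph c \<Omega>"
  then show "pairing p q = zform"
    using q kforms_swap_Cons[OF \<Omega>, of "fst q" "fst p"]
    by (simp add: hyperplane_graph_def pairing_def ip_def zform_def fun_eq_iff)
qed

lemma Eproj_hyperplane_graph: "Eproj (hyperplane_graph c \<Omega>) = {Y. Y $ c = 0}"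
  unfolding Eproj_def hyperplane_graph_def
proof (intro set_eqI iffI)
  fix Y :: "real^_" assume "Y \<in> {Y. Y $ c = 0}"
  then show "Y \<in> fst ` {p. fst p $ c = 0 \<and> snd p = ip (fst p) \<Omega>}"
    by (intro image_eqI[of _ _ "(Y, ip Y \<Omega>)"]) auto
qed auto

lemma LV_hyperplane_graph: "LV (hyperplane_graph c \<Omega>) = {Y. Y $ c = 0 \<and> ip Y \<Omega> = zform}"
  unfolding LV_def hyperplane_graph_def by auto

lemma pr2_hyperplane_graph: "pr2 (hyperplane_graph c \<Omega>) = (\<lambda>Y. ip Y \<Omega>) ` {Y. Y $ c = 0}"
  unfolding pr2_def hyperplane_graph_def
proof (intro set_eqI iffI)
  fix \<eta> assume "\<eta> \<in> (\<lambda>Y. ip Y \<Omega>) ` {Y. Y $ c = 0}"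
  then obtain Y where "Y $ c = 0" "\<eta> = ip Y \<Omega>" by blast
  then show "\<eta> \<in> snd ` {p. fst p $ c = 0 \<and> snd p = ip (fst p) \<Omega>}"
    by (intro image_eqI[of _ _ "(Y, ip Y \<Omega>)"]) auto
qed auto

lemma circ_zform: "circ {zform} = UNIV"
  by (simp add: circ_def)

lemma nonstandard_hyperplane_graph:
  assumes "\<Omega> \<in> kforms (Suc k)" "2 \<le> k"
  shows "nonstandard k (hyperplane_graph c \<Omega>)"
proof -
  have "axis c 1 \<notin> {Y :: real^_. Y $ c = 0}" by simp
  then have "circ (Ann k (Eproj (hyperplane_graph c \<Omega>))) \<noteq> Eproj (hyperplane_graph c \<Omega>)"
    unfolding Eproj_hyperplane_graph Ann_hyperplane[OF assms(2)] circ_zform by blast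
  then show ?thesis
    using isotropic_hyperplane_graph[OF assms(1)] by (simp add: nonstandard_def)
qed

lemma exists_C2s_not_C2w:
  assumes "2 \<le> k"
  shows "\<exists>L :: ((real^'n::finite) \<times> 'n form) set. is_subspace k L \<and> nonstandard k L \<and> C2s k L \<and> \<not> C2w k L"
proof -
  fix c :: 'n
  define L where "L = hyperplane_graph c zform"
  have "(0 :: real^'n) $ c = 0" by simp
  then have "LV L = {Y. Y $ c = 0}" "pr2 L = {zform}"
    by (auto simp: L_def LV_hyperplane_graph pr2_hyperplane_graph intro!: image_eqI[of _ _ 0])
  moreover have "axis c 1 \<notin> {Y :: real^'n. Y $ c = 0}" by simp
  then have "circ {zform} \<noteq> {Y :: real^'n. Y $ c = 0}" unfolding circ_zform by blast
  ultimately have "C2s k L \<and> \<not> C2w k L"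
    using isotropic_hyperplane_graph[OF zform_kforms, of k c] Ann_hyperplane[OF assms, of c]
    by (simp add: C2s_def C2w_def L_def)
  then show ?thesis
    using is_subspace_hyperplane_graph[OF zform_kforms] nonstandard_hyperplane_graph[OF zform_kforms assms]
    by (auto simp: L_def)
qed

section \<open>A decomposable form as a determinant\<close>

lemma det_row_linear:
  fixes M :: "'a::comm_ring_1^'n::finite^'n"
  shows "det (\<chi> r. if r = i then a *s u + b *s w else M $ r)
       = a * det (\<chi> r. if r = i then u else M $ r) + b * det (\<chi> r. if r = i then w else M $ r)"
  using det_row_add[of i "\<lambda>_. a *s u" "\<lambda>_. b *s w" "\<lambda>r. M $ r"]
    det_row_mul[of i a "\<lambda>_. u" "\<lambda>r. M $ r"] det_row_mul[of i b "\<lambda>_. w" "\<lambda>r. M $ r"]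
  by simp

lemma det_identity_row_replaced:
  fixes v :: "real^'n::finite"
  shows "det (\<chi> r. if r = a then v else axis r 1 :: real^'n^'n) = v $ a"
proof -
  define A :: "real^'n^'n" where "A = (\<chi> r. if r = a then (v $ a) *s axis r 1 else axis r 1)"
  have "(\<chi> r. if r = a then axis r 1 else axis r (1::real)) = (mat 1 :: real^'n^'n)"
    by (simp add: vec_eq_iff mat_def axis_def)
  then have "det A = v $ a" unfolding A_def det_row_mul by simp
  define x where "x = v - (v $ a) *s axis a 1"
  have "x = (\<Sum>j\<in>UNIV. x $ j *s axis j 1)" by (simp add: basis_expansion)
  also have "\<dots> \<in> vec.span {row j A |j. j \<noteq> a}"
  proof (rule vec.span_sum)
    fix j
    show "x $ j *s axis j 1 \<in> vec.span {row j A |j. j \<noteq> a}"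
    proof (cases "j = a")
      case False
      then have "axis j 1 \<in> {row j A |j. j \<noteq> a}" by (auto simp: row_def A_def vec_eq_iff)
      then show ?thesis by (intro vec.span_scale vec.span_base)
    qed (simp add: x_def vec.span_zero)
  qed
  finally have "det (\<chi> r. if r = a then row a A + x else row r A) = det A"
    by (rule det_row_span)
  moreover have "(\<chi> r. if r = a then row a A + x else row r A) = (\<chi> r. if r = a then v else axis r 1)"
    by (simp add: vec_eq_iff row_def A_def x_def)
  ultimately show ?thesis using \<open>det A = v $ a\<close> by simp
qed

text \<open>
  For a bijection \<open>h\<close> onto \<open>{0..<n}\<close>, \<open>minor_form h k\<close> is \<open>e\<^sup>j\<^sup>0 \<and> \<dots> \<and> e\<^sup>j\<^sup>k\<close> with
  \<open>j\<^sub>m = inv h m\<close>: the determinant of the identity matrix whose rows \<open>j\<^sub>0, \<dots>, j\<^sub>k\<close> are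
  replaced by the arguments, cut down to the coordinates \<open>j\<^sub>0, \<dots>, j\<^sub>k\<close>.
\<close>

definition restrict_coords :: "('n::finite \<Rightarrow> nat) \<Rightarrow> nat \<Rightarrow> real^'n \<Rightarrow> real^'n" where
  "restrict_coords h k y = (\<chi> j. if h j \<le> k then y $ j else 0)"

definition minor_matrix :: "('n::finite \<Rightarrow> nat) \<Rightarrow> nat \<Rightarrow> (real^'n) list \<Rightarrow> real^'n^'n" where
  "minor_matrix h k xs = (\<chi> i. if h i \<le> k then restrict_coords h k (xs ! h i) else axis i 1)"

definition minor_form :: "('n::finite \<Rightarrow> nat) \<Rightarrow> nat \<Rightarrow> 'n form" where
  "minor_form h k xs = (if length xs = Suc k then det (minor_matrix h k xs) else 0)"

lemma bij_enum_inv: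
  assumes "bij_betw h (UNIV :: 'n::finite set) {0..<CARD('n)}" "m < CARD('n)"
  shows "h (inv h m) = m"
  using assms by (auto simp: bij_betw_def intro: f_inv_into_f)

lemma minor_matrix_update:
  assumes "inj h" "h i = m" "m \<le> k" "m < length xs"
  shows "minor_matrix h k (xs[m := v]) = (\<chi> r. if r = i then restrict_coords h k v else minor_matrix h k xs $ r)"
proof -
  have "xs[m := v] ! h r = xs ! h r" if "r \<noteq> i" for r
    using assms(1,2) that by (metis injD nth_list_update_neq)
  then show ?thesis
    using assms(2-4) unfolding vec_eq_iff[of "minor_matrix h k (xs[m := v])"] by (simp add: minor_matrix_def)
qed

lemma minor_form_kforms:
  assumes h: "bij_betw h (UNIV :: 'n::finite set) {0..<CARD('n)}" and "k < CARD('n)"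
  shows "minor_form h k \<in> kforms (Suc k)"
  unfolding kforms_def mem_Collect_eq
proof (intro conjI allI impI)
  have "inj h" using h by (simp add: bij_betw_def)
  fix xs :: "(real^'n) list"
  show "minor_form h k xs = 0" if "length xs \<noteq> Suc k" using that by (simp add: minor_form_def)
  fix i and u w :: "real^'n" and a b :: real
  assume i: "length xs = Suc k \<and> i < Suc k"
  then have "h (inv h i) = i" using bij_enum_inv[OF h] \<open>k < CARD('n)\<close> by simp
  note update = minor_matrix_update[OF \<open>inj h\<close> this]
  have restrict: "restrict_coords h k (a *\<^sub>R u + b *\<^sub>R w) = a *s restrict_coords h k u + b *s restrict_coords h k w"
    by (simp add: restrict_coords_def vec_eq_iff)
  have "minor_form h k (xs[i := a *\<^sub>R u + b *\<^sub>R w])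
      = det (\<chi> r. if r = inv h i then restrict_coords h k (a *\<^sub>R u + b *\<^sub>R w) else minor_matrix h k xs $ r)"
    using i by (simp add: minor_form_def update)
  also have "\<dots> = a * minor_form h k (xs[i := u]) + b * minor_form h k (xs[i := w])"
    unfolding restrict det_row_linear using i by (simp add: minor_form_def update)
  finally show "minor_form h k (xs[i := a *\<^sub>R u + b *\<^sub>R w])
      = a * minor_form h k (xs[i := u]) + b * minor_form h k (xs[i := w])" .
next
  fix xs :: "(real^'n) list"
  assume xs: "length xs = Suc k \<and> \<not> distinct xs"
  then obtain p q where pq: "p < Suc k" "q < Suc k" "p \<noteq> q" "xs ! p = xs ! q"
    by (auto simp: distinct_conv_nth)
  then have "h (inv h p) = p" "h (inv h q) = q" using bij_enum_inv[OF h] \<open>k < CARD('n)\<close> by auto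
  then have "inv h p \<noteq> inv h q" "row (inv h p) (minor_matrix h k xs) = row (inv h q) (minor_matrix h k xs)"
    using pq by (simp_all add: row_def minor_matrix_def) metis
  then show "minor_form h k xs = 0" by (simp add: minor_form_def det_identical_rows)
qed

lemma ip_minor_form_vanish:
  assumes h: "bij_betw h (UNIV :: 'n::finite set) {0..<CARD('n)}" and Y: "\<forall>j. h j \<le> k \<longrightarrow> Y $ j = 0"
  shows "ip Y (minor_form h k) = zform"
proof -
  have "h (inv h 0) = 0" using bij_enum_inv[OF h] by simp
  then have "row (inv h 0) (minor_matrix h k (Y # xs)) = 0" for xs
    using Y by (simp add: row_def minor_matrix_def restrict_coords_def vec_eq_iff)
  then have "det (minor_matrix h k (Y # xs)) = 0" for xs by (rule det_zero_row(1))
  then show ?thesis by (simp add: ip_eq_zform_iff minor_form_def)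
qed

lemma minor_form_basis:
  assumes h: "bij_betw h (UNIV :: 'n::finite set) {0..<CARD('n)}" and "k < CARD('n)" "h a \<le> k"
  shows "minor_form h k (map (\<lambda>m. if m = h a then X else axis (inv h m) 1) [0..<Suc k]) = X $ a"
proof -
  have "inj h" using h by (simp add: bij_betw_def)
  have "minor_matrix h k (map (\<lambda>m. if m = h a then X else axis (inv h m) 1) [0..<Suc k])
      = (\<chi> r. if r = a then restrict_coords h k X else axis r 1)"
    using \<open>h a \<le> k\<close> \<open>inj h\<close>
    by (auto simp: vec_eq_iff minor_matrix_def restrict_coords_def axis_def inj_eq less_Suc_eq_le
        simp del: upt_Suc)
  moreover have "restrict_coords h k X $ a = X $ a" using \<open>h a \<le> k\<close> by (simp add: restrict_coords_def)
  ultimately show ?thesis by (simp add: minor_form_def det_identity_row_replaced del: upt_Suc)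
qed

lemma minor_form_pair_nonzero:
  assumes h: "bij_betw h (UNIV :: 'n::finite set) {0..<CARD('n)}" and "k < CARD('n)"
    and a: "h a \<le> k" "X $ a \<noteq> 0" and b: "h b \<le> k" "b \<noteq> a"
  shows "\<exists>zs. minor_form h k (axis b 1 # X # zs) \<noteq> 0"
proof -
  have "inj h" using h by (simp add: bij_betw_def)
  define xs where "xs = map (\<lambda>m. if m = h a then X else axis (inv h m) 1) [0..<Suc k]"
  have "minor_form h k xs \<noteq> 0" using minor_form_basis[OF h \<open>k < CARD('n)\<close> a(1)] a(2) by (simp add: xs_def)
  moreover have "xs ! h b = axis b 1" "xs ! h a = X"
    using a(1) b \<open>inj h\<close> by (auto simp: xs_def inj_eq simp del: upt_Suc)
  moreover have "h b \<noteq> h a" using b(2) \<open>inj h\<close> by (simp add: inj_eq)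
  ultimately show ?thesis
    using kforms_nonzero_pair_front[OF minor_form_kforms[OF h \<open>k < CARD('n)\<close>], of xs "h b" "h a"] a(1) b(1)
    by (simp add: xs_def del: upt_Suc)
qed

lemma exists_other_index:
  assumes h: "bij_betw h (UNIV :: 'n::finite set) {0..<CARD('n)}" and "2 \<le> k" "k < CARD('n)"
  shows "\<exists>b. h b \<le> k \<and> b \<noteq> a \<and> h b \<noteq> k"
proof -
  define m where "m = (if h a = 0 then 1 else 0 :: nat)"
  have "h (inv h m) = m" using bij_enum_inv[OF h] assms(2,3) by (simp add: m_def)
  then show ?thesis using assms(2) by (intro exI[of _ "inv h m"]) (auto simp: m_def)
qed

lemma ip_minor_form_eq_zform_iff:
  assumes h: "bij_betw h (UNIV :: 'n::finite set) {0..<CARD('n)}" and k: "2 \<le> k" "k < CARD('n)"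
  shows "ip X (minor_form h k) = zform \<longleftrightarrow> (\<forall>j. h j \<le> k \<longrightarrow> X $ j = 0)"
proof
  assume X: "ip X (minor_form h k) = zform"
  show "\<forall>j. h j \<le> k \<longrightarrow> X $ j = 0"
  proof (rule ccontr)
    assume "\<not> (\<forall>j. h j \<le> k \<longrightarrow> X $ j = 0)"
    then obtain a where a: "h a \<le> k" "X $ a \<noteq> 0" by blast
    obtain b where b: "h b \<le> k" "b \<noteq> a" using exists_other_index[OF h k] by blast
    obtain zs where "minor_form h k (axis b 1 # X # zs) \<noteq> 0"
      using minor_form_pair_nonzero[OF h k(2) a b] by blast
    then show False
      using X kforms_swap_Cons[OF minor_form_kforms[OF h k(2)], of "axis b 1" X zs]
      by (simp add: ip_eq_zform_iff)
  qed
qed (rule ip_minor_form_vanish[OF h])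

context
  fixes h :: "'n::finite \<Rightarrow> nat" and k :: nat
  assumes h: "bij_betw h (UNIV :: 'n set) {0..<CARD('n)}" and k: "2 \<le> k" "k < CARD('n)"
begin

lemma h_inv_k: "h (inv h k) = k"
  using bij_enum_inv[OF h k(2)] .

lemma LV_minor_graph:
  "LV (hyperplane_graph (inv h k) (minor_form h k)) = {X. \<forall>j. h j \<le> k \<longrightarrow> X $ j = 0}"
  using h_inv_k
  by (auto simp: LV_hyperplane_graph ip_minor_form_eq_zform_iff[OF h k])

lemma circ_pr2_minor_graph:
  "circ (pr2 (hyperplane_graph (inv h k) (minor_form h k))) = {X. \<forall>j. h j \<le> k \<longrightarrow> X $ j = 0}"
proof (intro set_eqI iffI)
  fix X assume X: "X \<in> circ (pr2 (hyperplane_graph (inv h k) (minor_form h k)))"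
  show "X \<in> {X. \<forall>j. h j \<le> k \<longrightarrow> X $ j = 0}"
  proof (rule ccontr)
    assume "X \<notin> {X. \<forall>j. h j \<le> k \<longrightarrow> X $ j = 0}"
    then obtain a where a: "h a \<le> k" "X $ a \<noteq> 0" by blast
    obtain b where b: "h b \<le> k" "b \<noteq> a" "h b \<noteq> k" using exists_other_index[OF h k] by blast
    then have "axis b 1 $ inv h k = (0::real)" using h_inv_k by (auto simp: axis_def)
    then have "\<forall>zs. minor_form h k (axis b 1 # X # zs) = 0"
      using X by (force simp: circ_def pr2_hyperplane_graph ip_def zform_def fun_eq_iff)
    moreover obtain zs where "minor_form h k (axis b 1 # X # zs) \<noteq> 0"
      using minor_form_pair_nonzero[OF h k(2) a b(1,2)] by blast
    ultimately show False by blast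
  qed
next
  fix X :: "real^'n" assume "X \<in> {X. \<forall>j. h j \<le> k \<longrightarrow> X $ j = 0}"
  then have "minor_form h k (X # Y # zs) = 0" for Y zs
    using ip_minor_form_vanish[OF h] by (simp add: ip_eq_zform_iff)
  then have "ip X (ip Y (minor_form h k)) = zform" for Y
    using kforms_swap_Cons[OF minor_form_kforms[OF h k(2)], of Y X] by (simp add: ip_def zform_def)
  then show "X \<in> circ (pr2 (hyperplane_graph (inv h k) (minor_form h k)))"
    by (auto simp: circ_def pr2_hyperplane_graph)
qed

lemma not_C2s_minor_graph: "\<not> C2s k (hyperplane_graph (inv h k) (minor_form h k))"
proof
  define \<Omega> where "\<Omega> = minor_form h k"
  define e :: "real^'n" where "e = axis (inv h k) 1"
  have \<Omega>: "\<Omega> \<in> kforms (Suc k)" unfolding \<Omega>_def by (rule minor_form_kforms[OF h k(2)])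
  assume "C2s k (hyperplane_graph (inv h k) \<Omega>)"
  then have Ann: "Ann k {X. \<forall>j. h j \<le> k \<longrightarrow> X $ j = 0} = (\<lambda>Y. ip Y \<Omega>) ` {Y. Y $ inv h k = 0}"
    using LV_minor_graph by (simp add: C2s_def pr2_hyperplane_graph \<Omega>_def)
  have "ip Y (ip e \<Omega>) = zform" if "\<forall>j. h j \<le> k \<longrightarrow> Y $ j = 0" for Y
    using that ip_minor_form_vanish[OF h] kforms_swap_Cons[OF \<Omega>, of e Y]
    by (simp add: \<Omega>_def ip_def zform_def fun_eq_iff)
  then have "ip e \<Omega> \<in> Ann k {X. \<forall>j. h j \<le> k \<longrightarrow> X $ j = 0}"
    using ip_kforms[OF \<Omega>] by (simp add: Ann_def)
  then obtain Y where Y: "Y $ inv h k = 0" "ip e \<Omega> = ip Y \<Omega>" using Ann by auto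
  then have "ip (Y - e) \<Omega> = zform"
    using ip_linear[OF \<Omega>, of 1 Y "-1" e] by (simp add: zform_def)
  then have "(Y - e) $ inv h k = 0"
    using ip_minor_form_eq_zform_iff[OF h k] h_inv_k by (simp add: \<Omega>_def)
  then show False using Y(1) by (simp add: e_def)
qed

lemma exists_C2w_not_C2s:
  "\<exists>L :: ((real^'n) \<times> 'n form) set. is_subspace k L \<and> nonstandard k L \<and> C2w k L \<and> \<not> C2s k L"
proof (intro exI conjI)
  let ?L = "hyperplane_graph (inv h k) (minor_form h k)"
  show "is_subspace k ?L" "nonstandard k ?L"
    using is_subspace_hyperplane_graph nonstandard_hyperplane_graph minor_form_kforms[OF h k(2)] k(1)
    by blast+
  show "C2w k ?L"
    using isotropic_hyperplane_graph[OF minor_form_kforms[OF h k(2)]] LV_minor_graph circ_pr2_minor_graph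
    by (simp add: C2w_def)
  show "\<not> C2s k ?L" by (rule not_C2s_minor_graph)
qed

end

theorem propositionA5:
  fixes k :: nat
  assumes "2 \<le> k" and "k \<le> CARD('n) - 1"
  shows "(\<forall>L :: ((real^('n::finite)) \<times> ('n::finite) form) set. is_subspace k L \<and> nonstandard k L \<longrightarrow>
            C3s k L \<and> \<not> C3w k L \<and> \<not> C1 k L)
       \<and> (\<exists>L :: ((real^('n::finite)) \<times> ('n::finite) form) set. is_subspace k L \<and> nonstandard k L \<and>
            C2s k L \<and> \<not> C2w k L)
       \<and> (\<exists>L :: ((real^('n::finite)) \<times> ('n::finite) form) set. is_subspace k L \<and> nonstandard k L \<and>
            C2w k L \<and> \<not> C2s k L)"
proof -
  have "0 < k" "k < CARD('n)" using assms by linarith+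
  obtain h :: "'n \<Rightarrow> nat" where h: "bij_betw h UNIV {0..<CARD('n)}"
    using ex_bij_betw_finite_nat[of "UNIV :: 'n set"] by auto
  show ?thesis
    using nonstandard_C3s nonstandard_not_C3w nonstandard_not_C1 \<open>0 < k\<close>
      exists_C2s_not_C2w[OF assms(1)] exists_C2w_not_C2s[OF h assms(1) \<open>k < CARD('n)\<close>]
    by blast
qed

end
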